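(* Let $n\ge 2$ and let $F(x)=\frac{1}{1+\exp(-x)}$ be the logistic cumulative distribution function. Let $D=(D_{i,j,k})$, $i,j\in\{1,\dots,n\}$, $k\in\{1,2\}$, be nonnegative real data with $D_{i,j,1}=D_{j,i,2}$ for all $i,j$. Let $I$ be a set of ordered pairs $(i,j)$ with $i\neq j$ such that $(i,j)\in I$ if and only if $(j,i)\in I$, and such that $D_{i,j,1}>0$ and $D_{i,j,2}>0$ for all $(i,j)\in I$. Suppose the undirected graph $G_I$ on vertex set $\{1,\dots,n\}$ with an edge $\{i,j\}$ whenever $(i,j)\in I$ is connected. For $(i,j)\in I$ put $h_{i,j}=D_{i,j,2}/D_{i,j,1}$. Then the following are equivalent: (a) for every cycle $(i_1,i_2,\dots,i_k,i_1)$ in $G_I$ (i.e. $(i_l,i_{l+1})\in I$ for $l=1,\dots,k-1$ and $(i_k,i_1)\in I$) one has $h_{i_1,i_2}\cdot h_{i_2,i_3}\cdots h_{i_{k-1},i_k}\cdot h_{i_k,i_1}=1$; (b) there exists $\underline{m}^{(0)}=(0,m_2^{(0)},\dots,m_n^{(0)})\in\mathbb{R}^n$ such that $$\frac{D_{i,j,2}}{D_{i,j,1}}=\frac{F\big(m_i^{(0)}-m_j^{(0)}\big)}{F\big(m_j^{(0)}-m_i^{(0)}\big)}\quad\text{for all }(i,j)\in I.$$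
   Context: In the Bradley–Terry paired comparison model, $D_{i,j,1}$ is the number (or weight) of comparisons with outcome "$i$ is worse than $j$" and $D_{i,j,2}$ the number with outcome "$i$ is better than $j$", so $D_{i,j,1}=D_{j,i,2}$. The data matrix $D$ is called consistent in $I$ when condition (a) holds. *)

theory Defs
  imports "HOL-Analysis.Analysis"
begin

definition logistic :: "real \<Rightarrow> real" where
  "logistic x = 1 / (1 + exp (- x))"

text \<open>Undirected graph G_I on {1..n}: connected iff every two vertices are joined by a
  path of I-steps (I is symmetric).\<close>
definition graph_connected :: "nat \<Rightarrow> (nat \<times> nat) set \<Rightarrow> bool" where
  "graph_connected n I \<longleftrightarrow> (\<forall>i\<in>{1..n}. \<forall>j\<in>{1..n}. (i, j) \<in> I\<^sup>*)"

definition is_cycle :: "(nat \<times> nat) set \<Rightarrow> nat list \<Rightarrow> bool" where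
  "is_cycle I c \<longleftrightarrow> c \<noteq> [] \<and>
     (\<forall>l. Suc l < length c \<longrightarrow> (c ! l, c ! Suc l) \<in> I) \<and>
     (last c, hd c) \<in> I"

definition cycle_prod :: "(nat \<Rightarrow> nat \<Rightarrow> real) \<Rightarrow> nat list \<Rightarrow> real" where
  "cycle_prod h c = (\<Prod>l<length c. h (c ! l) (c ! ((Suc l) mod length c)))"

end

theory Submission
  imports Defs
begin

text \<open>Taking logarithms, h_{i,j} = F(m_i - m_j) / F(m_j - m_i) = exp (m_i - m_j) says that
  m is a potential for the edge weights ln h_{i,j}, and the cycle condition says that these
  weights sum to zero around every closed walk. In a connected graph the potential is obtained
  by summing the weights along any walk to vertex 1: for two such walks p and q from i, a walk s
  from 1 to i closes both of them, so the weights of p and q both equal minus that of s.\<close>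

abbreviation walk :: "('a \<times> 'a) set \<Rightarrow> 'a list \<Rightarrow> bool" where
  "walk I \<equiv> successively (\<lambda>a b. (a, b) \<in> I)"

definition walk_from_to :: "('a \<times> 'a) set \<Rightarrow> 'a \<Rightarrow> 'a \<Rightarrow> 'a list \<Rightarrow> bool" where
  "walk_from_to I a b p \<longleftrightarrow> walk I p \<and> p \<noteq> [] \<and> hd p = a \<and> last p = b"

fun walk_weight :: "('a \<Rightarrow> 'a \<Rightarrow> 'b::comm_monoid_add) \<Rightarrow> 'a list \<Rightarrow> 'b" where
  "walk_weight L (a # b # xs) = L a b + walk_weight L (b # xs)"
| "walk_weight L _ = 0"

lemma walk_weight_join:
  assumes "xs \<noteq> []" and "ys \<noteq> []" and "last xs = hd ys"
  shows "walk_weight L (xs @ tl ys) = walk_weight L xs + walk_weight L ys"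
  using assms
proof (induction L xs rule: walk_weight.induct)
  case ("2_2" L x)
  then show ?case by (cases ys) simp_all
qed (simp_all add: add.assoc)

lemma walk_weight_telescoping:
  fixes m :: "'a \<Rightarrow> 'b::ab_group_add"
  shows "xs \<noteq> [] \<Longrightarrow> walk_weight (\<lambda>a b. m a - m b) xs = m (hd xs) - m (last xs)"
  by (induction "\<lambda>a b. m a - m b" xs rule: walk_weight.induct) simp_all

lemma walk_weight_cong:
  "walk I xs \<Longrightarrow> (\<And>a b. (a, b) \<in> I \<Longrightarrow> L a b = L' a b) \<Longrightarrow> walk_weight L xs = walk_weight L' xs"
  by (induction L xs rule: walk_weight.induct) simp_all

lemma walk_weight_conv_sum:
  "walk_weight L xs = (\<Sum>l<length xs - 1. L (xs ! l) (xs ! Suc l))"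
  by (induction L xs rule: walk_weight.induct)
    (simp_all add: sum.lessThan_Suc_shift del: sum.lessThan_Suc)

lemma walk_from_to_join:
  "walk_from_to I a b p \<Longrightarrow> walk_from_to I b c q \<Longrightarrow> walk_from_to I a c (p @ tl q)"
  unfolding walk_from_to_def
  by (cases q) (auto simp: successively_append_iff successively_Cons)

lemma walk_from_to_singleton: "walk_from_to I a a [a]"
  by (simp add: walk_from_to_def)

lemma walk_from_to_Cons:
  "(a, b) \<in> I \<Longrightarrow> walk_from_to I b c p \<Longrightarrow> walk_from_to I a c (a # p)"
  unfolding walk_from_to_def by (auto simp: successively_Cons)

lemma rtrancl_imp_walk_from_to:
  assumes "(a, b) \<in> I\<^sup>*"
  obtains p where "walk_from_to I a b p"
  using assms
proof (induction arbitrary: thesis rule: converse_rtrancl_induct)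
  case base
  from walk_from_to_singleton show ?case by (rule base)
next
  case (step a a')
  obtain p where "walk_from_to I a' b p" by (rule step.IH)
  from walk_from_to_Cons[OF step.hyps(1) this] show ?case by (rule step.prems)
qed

lemma closed_walk_weight_eq_zero_if_potential:
  fixes L :: "'a \<Rightarrow> 'a \<Rightarrow> 'b::ab_group_add"
  assumes "\<forall>(i, j)\<in>I. L i j = m i - m j" and "walk_from_to I a a w"
  shows "walk_weight L w = 0"
proof -
  have "walk I w"
    using assms(2) by (simp add: walk_from_to_def)
  then have "walk_weight L w = walk_weight (\<lambda>i j. m i - m j) w"
    by (rule walk_weight_cong) (use assms(1) in blast)
  also have "\<dots> = 0"
    using assms(2) by (simp add: walk_from_to_def walk_weight_telescoping)
  finally show ?thesis .
qed

lemma potential_if_closed_walk_weights_eq_zero: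
  fixes L :: "'a \<Rightarrow> 'a \<Rightarrow> 'b::ab_group_add"
  assumes I_sub: "I \<subseteq> V \<times> V" and r: "r \<in> V"
    and conn: "\<And>i j. i \<in> V \<Longrightarrow> j \<in> V \<Longrightarrow> (i, j) \<in> I\<^sup>*"
    and closed: "\<And>a w. walk_from_to I a a w \<Longrightarrow> walk_weight L w = 0"
  shows "\<exists>m. m r = 0 \<and> (\<forall>(i, j)\<in>I. L i j = m i - m j)"
proof -
  have same_weight: "walk_weight L p = walk_weight L q"
    if "i \<in> V" and p: "walk_from_to I i r p" and q: "walk_from_to I i r q" for i p q
  proof -
    obtain s where s: "walk_from_to I r i s"
      using conn[OF r \<open>i \<in> V\<close>] by (rule rtrancl_imp_walk_from_to)
    have "walk_weight L s + walk_weight L p = walk_weight L (s @ tl p)"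
      using s p by (intro walk_weight_join[symmetric]) (auto simp: walk_from_to_def)
    also have "\<dots> = 0"
      using walk_from_to_join[OF s p] by (rule closed)
    also have "\<dots> = walk_weight L (s @ tl q)"
      using walk_from_to_join[OF s q] by (rule closed[symmetric])
    also have "\<dots> = walk_weight L s + walk_weight L q"
      using s q by (intro walk_weight_join) (auto simp: walk_from_to_def)
    finally show ?thesis by simp
  qed
  define m where "m i = walk_weight L (SOME p. walk_from_to I i r p)" for i
  have m: "m i = walk_weight L p" if "i \<in> V" and p: "walk_from_to I i r p" for i p
  proof -
    have "walk_from_to I i r (SOME p. walk_from_to I i r p)"
      using p by (rule someI)
    from same_weight[OF \<open>i \<in> V\<close> this p] show ?thesis
      by (simp add: m_def)
  qed
  have "m r = 0"
    using m[OF r walk_from_to_singleton] by simp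
  moreover have "L i j = m i - m j" if ij: "(i, j) \<in> I" for i j
  proof -
    have V: "i \<in> V" "j \<in> V" using ij I_sub by auto
    obtain p where p: "walk_from_to I j r p"
      using conn[OF V(2) r] by (rule rtrancl_imp_walk_from_to)
    have "m i = walk_weight L (i # p)"
      using m[OF V(1) walk_from_to_Cons[OF ij p]] .
    also have "\<dots> = L i j + m j"
      using p m[OF V(2) p] by (cases p) (auto simp: walk_from_to_def)
    finally show ?thesis by (simp add: algebra_simps)
  qed
  ultimately show ?thesis by blast
qed

lemma closed_walk_weights_eq_zero_iff_potential:
  fixes L :: "'a \<Rightarrow> 'a \<Rightarrow> 'b::ab_group_add"
  assumes "I \<subseteq> V \<times> V" and "r \<in> V"
    and "\<And>i j. i \<in> V \<Longrightarrow> j \<in> V \<Longrightarrow> (i, j) \<in> I\<^sup>*"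
  shows "(\<forall>a w. walk_from_to I a a w \<longrightarrow> walk_weight L w = 0) \<longleftrightarrow>
    (\<exists>m. m r = 0 \<and> (\<forall>(i, j)\<in>I. L i j = m i - m j))"
  using potential_if_closed_walk_weights_eq_zero[OF assms, of L]
    closed_walk_weight_eq_zero_if_potential[of I L] by blast

lemma is_cycle_iff_closed_walk: "is_cycle I c \<longleftrightarrow> c \<noteq> [] \<and> walk I (c @ [hd c])"
  unfolding is_cycle_def successively_conv_nth[of "\<lambda>a b. (a, b) \<in> I" c, symmetric]
  by (auto simp: successively_append_iff)

lemma cycle_prod_eq_exp_walk_weight:
  assumes c: "is_cycle I c" and h: "\<And>a b. (a, b) \<in> I \<Longrightarrow> h a b = exp (L a b)"
  shows "cycle_prod h c = exp (walk_weight L (c @ [hd c]))"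
proof -
  define w where "w = c @ [hd c]"
  define k where "k = length c"
  have "c \<noteq> []" and "walk I w"
    using c by (simp_all add: is_cycle_iff_closed_walk w_def)
  have w_nth: "w ! l = c ! l" if "l < k" for l
    using that by (simp add: w_def k_def nth_append)
  have w_nth_Suc: "w ! Suc l = c ! (Suc l mod k)" if "l < k" for l
  proof (cases "Suc l < k")
    case True
    then show ?thesis by (simp add: w_def k_def nth_append)
  next
    case False
    with that have "Suc l = k" by simp
    with \<open>c \<noteq> []\<close> show ?thesis by (simp add: w_def k_def nth_append hd_conv_nth)
  qed
  have "cycle_prod h c = (\<Prod>l<k. h (w ! l) (w ! Suc l))"
    unfolding cycle_prod_def k_def[symmetric] by (rule prod.cong) (simp_all add: w_nth w_nth_Suc)
  also have "\<dots> = (\<Prod>l<k. exp (L (w ! l) (w ! Suc l)))"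
    using successively_nth[OF \<open>walk I w\<close>] by (intro prod.cong refl h) (simp add: w_def k_def)
  also have "\<dots> = exp (walk_weight L w)"
    by (simp add: exp_sum walk_weight_conv_sum w_def k_def)
  finally show ?thesis by (simp add: w_def)
qed

lemma cycle_prods_eq_one_iff_closed_walk_weights_eq_zero:
  assumes h: "\<And>a b. (a, b) \<in> I \<Longrightarrow> h a b = exp (L a b)"
  shows "(\<forall>c. is_cycle I c \<longrightarrow> cycle_prod h c = 1) \<longleftrightarrow>
    (\<forall>a w. walk_from_to I a a w \<longrightarrow> walk_weight L w = 0)"
proof (intro iffI allI impI)
  fix a w
  assume cycles: "\<forall>c. is_cycle I c \<longrightarrow> cycle_prod h c = 1" and w: "walk_from_to I a a w"
  show "walk_weight L w = 0"
  proof (cases "tl w = []")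
    case True
    with w show ?thesis by (cases w) (simp_all add: walk_from_to_def)
  next
    case False
    define c where "c = butlast w"
    have "c \<noteq> []"
      using w False by (cases w) (auto simp: c_def walk_from_to_def)
    have w_eq: "c @ [last w] = w"
      unfolding c_def using w by (intro append_butlast_last_id) (simp add: walk_from_to_def)
    then have "hd c = last w"
      using w \<open>c \<noteq> []\<close> by (metis hd_append2 walk_from_to_def)
    with w_eq have "c @ [hd c] = w" by simp
    with w \<open>c \<noteq> []\<close> have "is_cycle I c"
      by (simp add: is_cycle_iff_closed_walk walk_from_to_def)
    then have "exp (walk_weight L w) = cycle_prod h c"
      using cycle_prod_eq_exp_walk_weight[OF _ h] \<open>c @ [hd c] = w\<close> by simp
    also have "\<dots> = 1"
      using cycles \<open>is_cycle I c\<close> by blast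
    finally show ?thesis by simp
  qed
next
  fix c
  assume closed: "\<forall>a w. walk_from_to I a a w \<longrightarrow> walk_weight L w = 0" and c: "is_cycle I c"
  then have "walk_from_to I (hd c) (hd c) (c @ [hd c])"
    by (simp add: is_cycle_iff_closed_walk walk_from_to_def)
  with closed cycle_prod_eq_exp_walk_weight[OF c h] show "cycle_prod h c = 1" by simp
qed

lemma logistic_div_logistic_minus: "logistic x / logistic (- x) = exp x"
proof -
  have "1 + exp x > 0" by (simp add: add_pos_pos)
  then show ?thesis by (simp add: logistic_def exp_minus field_simps)
qed

theorem theorem2:
  fixes n :: nat and D :: "nat \<Rightarrow> nat \<Rightarrow> nat \<Rightarrow> real" and I :: "(nat \<times> nat) set"
  assumes n2: "n \<ge> 2"
    and D_nonneg: "\<forall>i\<in>{1..n}. \<forall>j\<in>{1..n}. \<forall>k\<in>{1,2}. D i j k \<ge> 0"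
    and D_sym: "\<forall>i\<in>{1..n}. \<forall>j\<in>{1..n}. D i j 1 = D j i 2"
    and I_sub: "I \<subseteq> {1..n} \<times> {1..n}"
    and I_irrefl: "\<forall>(i, j)\<in>I. i \<noteq> j"
    and I_sym: "\<forall>i j. (i, j) \<in> I \<longleftrightarrow> (j, i) \<in> I"
    and I_pos: "\<forall>(i, j)\<in>I. D i j 1 > 0 \<and> D i j 2 > 0"
    and conn: "graph_connected n I"
  shows "(\<forall>c. is_cycle I c \<longrightarrow> cycle_prod (\<lambda>i j. D i j 2 / D i j 1) c = 1)
     \<longleftrightarrow> (\<exists>m :: nat \<Rightarrow> real. m 1 = 0 \<and>
            (\<forall>(i, j)\<in>I. D i j 2 / D i j 1 = logistic (m i - m j) / logistic (m j - m i)))"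
proof -
  define L where "L i j = ln (D i j 2 / D i j 1)" for i j
  have exp_L: "D i j 2 / D i j 1 = exp (L i j)" if "(i, j) \<in> I" for i j
    using I_pos that by (auto simp: L_def)
  have potential_iff: "L i j = m i - m j \<longleftrightarrow>
      D i j 2 / D i j 1 = logistic (m i - m j) / logistic (m j - m i)" if "(i, j) \<in> I" for i j m
  proof -
    have "logistic (m i - m j) / logistic (m j - m i) = exp (m i - m j)"
      using logistic_div_logistic_minus[of "m i - m j"] by simp
    then show ?thesis by (simp only: exp_L[OF that] exp_inj_iff)
  qed
  have "(\<forall>c. is_cycle I c \<longrightarrow> cycle_prod (\<lambda>i j. D i j 2 / D i j 1) c = 1) \<longleftrightarrow>
      (\<forall>a w. walk_from_to I a a w \<longrightarrow> walk_weight L w = 0)"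
    using exp_L by (rule cycle_prods_eq_one_iff_closed_walk_weights_eq_zero)
  also have "\<dots> \<longleftrightarrow> (\<exists>m. m 1 = 0 \<and> (\<forall>(i, j)\<in>I. L i j = m i - m j))"
    using I_sub n2 conn
    by (intro closed_walk_weights_eq_zero_iff_potential[where V = "{1..n}"])
      (auto simp: graph_connected_def)
  also have "\<dots> \<longleftrightarrow> (\<exists>m :: nat \<Rightarrow> real. m 1 = 0 \<and>
      (\<forall>(i, j)\<in>I. D i j 2 / D i j 1 = logistic (m i - m j) / logistic (m j - m i)))"
    using potential_iff by blast
  finally show ?thesis .
qed

end
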